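(* Assume $\Delta^2=0$, constant budget $\Lambda(t)=\Lambda$, $\pi_0<1$ with $\pi_0\ge(1-\pi_0)/|G|$, and hypothesis (U). Then as $t\to\infty$ the expected per-stage cost of the semi-omniscient policy satisfies $$\mathbb E[M_t(\lambda^s)]\ge\frac{p_0Q(p_0Q+1-p_0)}{\pi_0\Lambda t}+O\!\left(\frac1{t^2}\right).$$
   Context: Model. There are $Q$ cells. At time $1$ each cell independently contains a target with probability $p_0\in(0,1)$; $\Psi(t)$ is the set of target locations at time $t$, the number of targets $|\Psi(1)|\sim\mathrm{Binomial}(Q,p_0)$ is constant in time, and at most one target occupies a cell. Each cell $j$ has a set $G(j)$ of neighbours with $|G(j)|=|G|$; $H(j)=\{j\}\cup G(j)$, $G(S)=\bigcup_{j\in S}G(j)$, $H(S)=S\cup G(S)$; neighbourhoods of distinct targets are disjoint. Between stages each target independently stays with probability $\pi_0$, otherwise moves to a uniformly chosen neighbour. Amplitudes: initial $\mathcal N(\mu_0,\sigma_0^2)$, random walk with $\mathcal N(0,\Delta^2)$ increments. Observations $y_i(t)=\sqrt{\lambda_i(t)}I_i(t)\theta_i(t)+n_i(t)$, $n_i(t)$ i.i.d. $\mathcal N(0,\sigma^2)$, efforts $\lambda_i(t)\ge0$, $\sum_i\lambda_i(t)\le\Lambda(t)$. Posterior precisions start at $c_i(1)=\sigma^2/\sigma_0^2$ and evolve by: for each target $n$ at $s^{(n)}(t)$ and each $i\in H(s^{(n)}(t))$, $1/c_i(t+1)=1/(c_{s^{(n)}(t)}(t)+\lambda_{s^{(n)}(t)}(t))+\Delta^2/\sigma^2$.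 The expected per-stage cost of a policy is $\mathbb E[M_t(\lambda)]=\mathbb E\big[\sum_{i\in\Psi(t)}1/(c_i(t)+\lambda_i(t))\big]$. Semi-omniscient policy: at stage $t$ it knows $\Psi(t-1)$, so $p_i(t)=\pi_0$ on $\Psi(t-1)$, $(1-\pi_0)/|G|$ on $G(\Psi(t-1))$, $0$ elsewhere, and allocates $\lambda^s(t)$ minimizing $\sum_ip_i(t)/(c_i(t)+\lambda_i)$ over $\lambda\ge0$, $\sum_i\lambda_i=\Lambda(t)$. Hypothesis (U): for every $t>1$, $c_i(t)=\bar c(t)$ for all $i\in H(\Psi(t-1))$, where $\bar c$ is the sequence with $\bar c(1)=\sigma^2/\sigma_0^2$ and $\bar c(t+1)=\frac{\pi_0^{3/2}+|G|^{-1/2}(1-\pi_0)^{3/2}}{\sqrt{\pi_0}+\sqrt{|G|(1-\pi_0)}}\big((1+|G|)\bar c(t)+\Lambda/|\Psi(1)|\big)$ if $\bar c(t)<c_{\mathrm{crit}}$ and $\bar c(t+1)=\bar c(t)+\pi_0\Lambda/|\Psi(1)|$ otherwise, with $c_{\mathrm{crit}}=\Lambda/(|\Psi(1)|e(\pi_0,G))$, $e(\pi_0,G)=\sqrt{|G|\pi_0/(1-\pi_0)}-1$. *)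

theory Defs
  imports "HOL-Probability.Probability" "HOL-Library.Landau_Symbols"
begin

text \<open>Abstraction of the stage-t configuration: with k = |Psi(1)| targets,
  target n (n < k) sits at Psi(t-1) in the cell (n,0); its |G| = g neighbours are
  the cells (n,j), 1 \<le> j \<le> g.  Neighbourhoods of distinct targets are disjoint.
  The cells relevant at stage t are H(Psi(t-1)).\<close>

definition rel_cells :: "nat \<Rightarrow> nat \<Rightarrow> (nat \<times> nat) set" where
  "rel_cells k g = {..<k} \<times> {0..g}"

definition move_pmf :: "real \<Rightarrow> nat \<Rightarrow> nat pmf" where
  "move_pmf pi0 g = bind_pmf (bernoulli_pmf pi0)
     (\<lambda>stay. if stay then return_pmf 0 else pmf_of_set {1..g})"

text \<open>Semi-omniscient probabilities p_i(t) on H(Psi(t-1)) (zero elsewhere).\<close>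
definition p_semi :: "real \<Rightarrow> nat \<Rightarrow> nat \<Rightarrow> real" where
  "p_semi pi0 g j = (if j = 0 then pi0 else (1 - pi0) / real g)"

definition e_fun :: "real \<Rightarrow> nat \<Rightarrow> real" where
  "e_fun pi0 g = sqrt (real g * pi0 / (1 - pi0)) - 1"

definition c_crit :: "real \<Rightarrow> nat \<Rightarrow> real \<Rightarrow> nat \<Rightarrow> real" where
  "c_crit pi0 g Lam k = Lam / (real k * e_fun pi0 g)"

definition alpha_coef :: "real \<Rightarrow> nat \<Rightarrow> real" where
  "alpha_coef pi0 g =
     (pi0 powr (3/2) + (real g) powr (-1/2) * (1 - pi0) powr (3/2))
       / (sqrt pi0 + sqrt (real g * (1 - pi0)))"

text \<open>The sequence cbar(t) (t \<ge> 1; the value at index 0 is a dummy),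
  with c1 = sigma^2/sigma0^2 and k = |Psi(1)|.\<close>
fun cbar :: "real \<Rightarrow> nat \<Rightarrow> real \<Rightarrow> real \<Rightarrow> nat \<Rightarrow> nat \<Rightarrow> real" where
  "cbar pi0 g Lam c1 k 0 = c1"
| "cbar pi0 g Lam c1 k (Suc 0) = c1"
| "cbar pi0 g Lam c1 k (Suc (Suc t)) =
     (let c = cbar pi0 g Lam c1 k (Suc t) in
      if c < c_crit pi0 g Lam k
      then alpha_coef pi0 g * ((1 + real g) * c + Lam / real k)
      else c + pi0 * Lam / real k)"

text \<open>Semi-omniscient allocation at a stage where every relevant cell has
  posterior precision c (hypothesis (U)): lam minimises
  sum_i p_i/(c + lam_i) over lam \<ge> 0 with sum_i lam_i = Lam.\<close>
definition feasible_alloc :: "nat \<Rightarrow> nat \<Rightarrow> real \<Rightarrow> (nat \<times> nat \<Rightarrow> real) \<Rightarrow> bool" where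
  "feasible_alloc k g Lam l \<longleftrightarrow>
     (\<forall>i\<in>rel_cells k g. 0 \<le> l i) \<and> (\<Sum>i\<in>rel_cells k g. l i) = Lam"

definition alloc_obj :: "real \<Rightarrow> nat \<Rightarrow> nat \<Rightarrow> real \<Rightarrow> (nat \<times> nat \<Rightarrow> real) \<Rightarrow> real" where
  "alloc_obj pi0 g k c l = (\<Sum>i\<in>rel_cells k g. p_semi pi0 g (snd i) / (c + l i))"

definition semi_omniscient_alloc ::
  "real \<Rightarrow> nat \<Rightarrow> real \<Rightarrow> nat \<Rightarrow> real \<Rightarrow> (nat \<times> nat \<Rightarrow> real) \<Rightarrow> bool" where
  "semi_omniscient_alloc pi0 g Lam k c l \<longleftrightarrow>
     feasible_alloc k g Lam l \<and>
     (\<forall>l'. feasible_alloc k g Lam l' \<longrightarrow> alloc_obj pi0 g k c l \<le> alloc_obj pi0 g k c l')"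

text \<open>Joint law of (|Psi(1)|, Psi(t)) at stage t: k ~ Binomial(Q,p0), and target n
  is at cell (n, pos n) where the offsets pos n are i.i.d. move_pmf.\<close>
definition stage_pmf :: "nat \<Rightarrow> real \<Rightarrow> real \<Rightarrow> nat \<Rightarrow> (nat \<times> (nat \<Rightarrow> nat)) pmf" where
  "stage_pmf Q p0 pi0 g = bind_pmf (binomial_pmf Q p0)
     (\<lambda>k. map_pmf (\<lambda>pos. (k, pos)) (Pi_pmf {..<k} 0 (\<lambda>_. move_pmf pi0 g)))"

text \<open>E[M_t(lam^s)] = E[ sum_{i in Psi(t)} 1/(c_i(t) + lam^s_i(t)) ], with
  c_i(t) = cbar(t) on H(Psi(t-1)) by hypothesis (U).  lam k t is the
  semi-omniscient allocation used at stage t when |Psi(1)| = k.\<close>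
definition expected_cost ::
  "nat \<Rightarrow> real \<Rightarrow> real \<Rightarrow> nat \<Rightarrow> real \<Rightarrow> real \<Rightarrow>
   (nat \<Rightarrow> nat \<Rightarrow> nat \<times> nat \<Rightarrow> real) \<Rightarrow> nat \<Rightarrow> real" where
  "expected_cost Q p0 pi0 g Lam c1 lam t =
     measure_pmf.expectation (stage_pmf Q p0 pi0 g)
       (\<lambda>(k, pos). \<Sum>n<k. 1 / (cbar pi0 g Lam c1 k t + lam k t (n, pos n)))"

end

theory Submission
  imports Defs
begin

(* Given k = |Psi(1)| targets, the expected stage cost is the allocation objective
   sum_i p_i / (c + lam_i) at the common precision c = cbar(t).  By convexity of 1/x
   every feasible allocation costs at least k / (c + Lam/k), independently of the
   optimality of lam.  The recursion for cbar grows at most by pi0 Lam / k per stage,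
   so c \<le> M + pi0 (Lam/k) t, and a tangent-line estimate turns k / (c + Lam/k) into
   k^2 / (pi0 Lam t) - D_k / t^2.  Averaging over k ~ Binomial(Q, p0) and using
   E[k^2] = p0 Q (p0 Q + 1 - p0) yields the theorem with h(t) = -D / t^2. *)

lemma recip_tangent:
  fixes x y :: real
  assumes "0 < x" "0 < y"
  shows "1 / y - (x - y) / y^2 \<le> 1 / x"
proof -
  have "1 / x - (1 / y - (x - y) / y^2) = (x - y)^2 / (x * y^2)"
    using assms by (simp add: field_simps power2_eq_square)
  moreover have "0 \<le> (x - y)^2 / (x * y^2)" using assms by simp
  ultimately show ?thesis by linarith
qed

lemma weighted_recip_sum_lower:
  fixes w l :: "'a \<Rightarrow> real" and c W L :: real
  assumes w: "\<And>i. i \<in> A \<Longrightarrow> 0 \<le> w i \<and> w i \<le> 1"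
    and l: "\<And>i. i \<in> A \<Longrightarrow> 0 \<le> l i"
    and c: "0 < c" and W: "0 < W" "sum w A = W" and L: "sum l A = L"
  shows "W / (c + L / W) \<le> (\<Sum>i\<in>A. w i / (c + l i))"
proof -
  define y where "y = c + L / W"
  have L0: "0 \<le> L" using L l by (metis sum_nonneg)
  have y: "0 < y" using c W L0 by (simp add: y_def add_pos_nonneg)
  have per_cell: "w i * (1 / y - (c + l i - y) / y^2) \<le> w i / (c + l i)" if "i \<in> A" for i
    using mult_left_mono[OF recip_tangent[of "c + l i" y]] w[OF that] l[OF that] c y by simp
  have wl: "(\<Sum>i\<in>A. w i * l i) \<le> L"
    unfolding L[symmetric] by (rule sum_mono) (use w l in \<open>simp add: mult_left_le_one_le\<close>)
  have "(\<Sum>i\<in>A. w i * (1 / y - (c + l i - y) / y^2))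
      = (\<Sum>i\<in>A. w i * (1 / y + L / W / y^2) - w i * l i / y^2)"
  proof (rule sum.cong)
    show "w i * (1 / y - (c + l i - y) / y^2) = w i * (1 / y + L / W / y^2) - w i * l i / y^2"
      for i
      using y by (simp add: y_def diff_divide_distrib add_divide_distrib algebra_simps)
  qed simp
  also have "\<dots> = W * (1 / y + L / W / y^2) - (\<Sum>i\<in>A. w i * l i) / y^2"
    using W by (simp add: sum_subtractf sum_divide_distrib flip: sum_distrib_right)
  also have "\<dots> = W / y + L / y^2 - (\<Sum>i\<in>A. w i * l i) / y^2"
    using W by (simp add: field_simps)
  also have "\<dots> \<ge> W / y" using wl by (simp add: divide_right_mono)
  finally have "W / y \<le> (\<Sum>i\<in>A. w i * (1 / y - (c + l i - y) / y^2))" .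
  also have "\<dots> \<le> (\<Sum>i\<in>A. w i / (c + l i))" by (rule sum_mono) (rule per_cell)
  finally show ?thesis unfolding y_def .
qed

lemma p_semi_sum:
  assumes "g \<ge> 1"
  shows "(\<Sum>j\<in>{0..g}. p_semi pi0 g j * f j) = pi0 * f 0 + (1 - pi0) * (sum f {1..g} / real g)"
proof -
  have "{0..g} = insert 0 {1..g}" by auto
  then show ?thesis by (simp add: p_semi_def sum_distrib_left sum_divide_distrib)
qed

lemma expectation_move_pmf:
  fixes f :: "nat \<Rightarrow> real"
  assumes "0 \<le> pi0" "pi0 \<le> 1" "g \<ge> 1"
  shows "measure_pmf.expectation (move_pmf pi0 g) f = (\<Sum>j\<in>{0..g}. p_semi pi0 g j * f j)"
proof -
  have ne: "{1..g} \<noteq> {}" using assms by auto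
  have "measure_pmf.expectation (move_pmf pi0 g) f
     = (\<Sum>b\<in>UNIV. pmf (bernoulli_pmf pi0) b *\<^sub>R
          measure_pmf.expectation (if b then return_pmf 0 else pmf_of_set {1..g}) f)"
    unfolding move_pmf_def using ne by (intro pmf_expectation_bind) auto
  also have "\<dots> = pi0 * f 0 + (1 - pi0) * (sum f {1..g} / real g)"
    using assms ne by (simp add: UNIV_bool integral_pmf_of_set)
  finally show ?thesis using p_semi_sum[OF assms(3)] by simp
qed

lemma finite_set_Pi_move_pmf:
  assumes "g \<ge> 1"
  shows "finite (set_pmf (Pi_pmf {..<(k::nat)} 0 (\<lambda>_. move_pmf pi0 g)))"
proof -
  have "set_pmf (move_pmf pi0 g) \<subseteq> {0..g}"
    using assms by (auto simp: move_pmf_def split: if_splits)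
  then have "finite (PiE_dflt {..<k} 0 (set_pmf \<circ> (\<lambda>_. move_pmf pi0 g)))"
    by (intro finite_PiE_dflt) (auto intro: finite_subset)
  then show ?thesis by (simp add: set_Pi_pmf)
qed

(* Linearity of expectation over the independent target movements: only the
   marginals, i.e. the law p_semi of one movement, matter. *)
lemma expectation_Pi_move_pmf:
  fixes F :: "nat \<Rightarrow> nat \<Rightarrow> real"
  assumes "0 \<le> pi0" "pi0 \<le> 1" "g \<ge> 1"
  shows "measure_pmf.expectation (Pi_pmf {..<k} 0 (\<lambda>_. move_pmf pi0 g)) (\<lambda>pos. \<Sum>n<k. F n (pos n))
     = (\<Sum>n<k. \<Sum>j\<in>{0..g}. p_semi pi0 g j * F n j)"
proof -
  let ?P = "Pi_pmf {..<k} 0 (\<lambda>_. move_pmf pi0 g)"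
  have marginal: "measure_pmf.expectation ?P (\<lambda>pos. F n (pos n))
      = measure_pmf.expectation (move_pmf pi0 g) (F n)" if "n < k" for n
  proof -
    have "measure_pmf.expectation ?P (\<lambda>pos. F n (pos n))
        = measure_pmf.expectation (map_pmf (\<lambda>pos. pos n) ?P) (F n)" by simp
    also have "map_pmf (\<lambda>pos. pos n) ?P = move_pmf pi0 g"
      using that by (subst Pi_pmf_component) auto
    finally show ?thesis .
  qed
  have "measure_pmf.expectation ?P (\<lambda>pos. \<Sum>n<k. F n (pos n))
      = (\<Sum>n<k. measure_pmf.expectation ?P (\<lambda>pos. F n (pos n)))"
    by (intro Bochner_Integration.integral_sum integrable_measure_pmf_finite
        finite_set_Pi_move_pmf assms(3))
  also have "\<dots> = (\<Sum>n<k. measure_pmf.expectation (move_pmf pi0 g) (F n))"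
    by (rule sum.cong) (simp_all add: marginal)
  finally show ?thesis by (simp add: expectation_move_pmf[OF assms])
qed

lemma alloc_obj_eq_expectation:
  assumes "0 \<le> pi0" "pi0 \<le> 1" "g \<ge> 1"
  shows "alloc_obj pi0 g k c l = measure_pmf.expectation (Pi_pmf {..<k} 0 (\<lambda>_. move_pmf pi0 g))
           (\<lambda>pos. \<Sum>n<k. 1 / (c + l (n, pos n)))"
  using expectation_Pi_move_pmf[OF assms, of k "\<lambda>n j. 1 / (c + l (n, j))"]
  by (simp add: alloc_obj_def rel_cells_def sum.cartesian_product case_prod_unfold)

lemma expected_cost_eq:
  assumes "0 \<le> p0" "p0 \<le> 1" "0 \<le> pi0" "pi0 \<le> 1" "g \<ge> 1"
  shows "expected_cost Q p0 pi0 g Lam c1 lam t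
    = (\<Sum>k\<le>Q. pmf (binomial_pmf Q p0) k * alloc_obj pi0 g k (cbar pi0 g Lam c1 k t) (lam k t))"
  unfolding expected_cost_def stage_pmf_def alloc_obj_eq_expectation[OF assms(3-5)] using assms
  by (subst pmf_expectation_bind) (auto simp: finite_set_Pi_move_pmf set_pmf_binomial_eq)

(* Every feasible allocation with k targets costs at least k / (c + Lam/k): the
   probabilities p_i lie in [0,1] and add up to 1 per target. *)
lemma feasible_alloc_cost_lower:
  assumes feas: "feasible_alloc k g Lam l" and c: "0 < c" and k: "k \<ge> 1"
    and pi0: "0 \<le> pi0" "pi0 \<le> 1" and g: "g \<ge> 1"
  shows "real k / (c + Lam / real k) \<le> alloc_obj pi0 g k c l"
proof -
  have weights: "0 \<le> p_semi pi0 g j \<and> p_semi pi0 g j \<le> 1" for j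
    using pi0 g by (auto simp: p_semi_def divide_le_eq)
  have "(\<Sum>j\<in>{0..g}. p_semi pi0 g j) = 1"
    using p_semi_sum[OF g, of pi0 "\<lambda>_. 1"] g by simp
  then have total: "(\<Sum>i\<in>rel_cells k g. p_semi pi0 g (snd i)) = real k"
    by (simp add: rel_cells_def sum.cartesian_product')
  show ?thesis
    unfolding alloc_obj_def
    using feas k c weights
    by (intro weighted_recip_sum_lower[OF _ _ c _ total])
       (auto simp: feasible_alloc_def rel_cells_def)
qed

lemma alpha_coef_pos:
  assumes "0 < pi0" "pi0 < 1"
  shows "0 < alpha_coef pi0 g"
proof -
  have "0 < pi0 powr (3/2) + (real g) powr (-1/2) * (1 - pi0) powr (3/2)"
    using assms by (intro add_pos_nonneg) auto
  moreover have "0 < sqrt pi0 + sqrt (real g * (1 - pi0))"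
    using assms by (intro add_pos_nonneg) auto
  ultimately show ?thesis unfolding alpha_coef_def by simp
qed

lemma linear_growth_bound:
  fixes u :: "nat \<Rightarrow> real"
  assumes "u 0 \<le> M" "\<And>t. u (Suc t) \<le> max M (u t + d)" "0 \<le> d"
  shows "u t \<le> M + d * real t"
proof (induction t)
  case 0
  then show ?case using assms(1) by simp
next
  case (Suc t)
  have "u (Suc t) \<le> max M (u t + d)" by (rule assms(2))
  also have "\<dots> \<le> max M (M + d * real (Suc t))"
    using Suc.IH by (simp add: algebra_simps)
  also have "\<dots> = M + d * real (Suc t)" using assms(3) by simp
  finally show ?case .
qed

lemma cbar_pos:
  assumes "0 < c1" "0 < alpha_coef pi0 g" "0 \<le> pi0" "0 \<le> Lam"
  shows "0 < cbar pi0 g Lam c1 k t"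
proof -
  have "0 < cbar pi0 g Lam c1 k (Suc s)" for s
  proof (induction s)
    case 0
    then show ?case using assms by simp
  next
    case (Suc s)
    then show ?case
      using assms by (auto simp: Let_def intro!: mult_pos_pos add_pos_nonneg)
  qed
  then show ?thesis using assms by (cases t) simp_all
qed

(* In the regime cbar < c_crit the next value is bounded by a constant, otherwise the
   precision increases by exactly pi0 Lam / k. *)
lemma cbar_step:
  fixes c1 Lam :: real and k :: nat
  assumes "0 \<le> alpha_coef pi0 g"
  defines "M \<equiv> max c1 (alpha_coef pi0 g * ((1 + real g) * c_crit pi0 g Lam k + Lam / real k))"
  shows "cbar pi0 g Lam c1 k (Suc t) \<le> max M (cbar pi0 g Lam c1 k t + pi0 * Lam / real k)"
proof (cases t)
  case 0
  then show ?thesis by (simp add: M_def)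
next
  case (Suc s)
  let ?c = "cbar pi0 g Lam c1 k (Suc s)"
  have "alpha_coef pi0 g * ((1 + real g) * ?c + Lam / real k) \<le> M"
    if "?c < c_crit pi0 g Lam k"
  proof -
    have "alpha_coef pi0 g * ((1 + real g) * ?c + Lam / real k)
        \<le> alpha_coef pi0 g * ((1 + real g) * c_crit pi0 g Lam k + Lam / real k)"
      using that assms(1) by (intro mult_left_mono) auto
    then show ?thesis unfolding M_def by linarith
  qed
  then show ?thesis using Suc by (auto simp: Let_def)
qed

lemma cbar_linear_growth:
  assumes "0 \<le> alpha_coef pi0 g" "0 \<le> pi0" "0 \<le> Lam"
  shows "\<exists>M. \<forall>t. cbar pi0 g Lam c1 k t \<le> M + pi0 * (Lam / real k) * real t"
proof -
  let ?M = "max c1 (alpha_coef pi0 g * ((1 + real g) * c_crit pi0 g Lam k + Lam / real k))"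
  have "cbar pi0 g Lam c1 k t \<le> ?M + pi0 * (Lam / real k) * real t" for t
    using cbar_step[OF assms(1)] assms(2,3)
    by (intro linear_growth_bound) (simp_all add: times_divide_eq_right)
  then show ?thesis by blast
qed

lemma expectation_binomial_pmf_Suc:
  fixes f :: "nat \<Rightarrow> real"
  assumes p: "p \<in> {0..1}"
  shows "measure_pmf.expectation (binomial_pmf (Suc n) p) f
     = p * measure_pmf.expectation (binomial_pmf n p) (\<lambda>k. f (Suc k))
       + (1 - p) * measure_pmf.expectation (binomial_pmf n p) f"
proof -
  have "measure_pmf.expectation (binomial_pmf (Suc n) p) f
     = (\<Sum>b\<in>UNIV. pmf (bernoulli_pmf p) b *\<^sub>R
        measure_pmf.expectation (map_pmf (\<lambda>k. (if b then 1 else 0) + k) (binomial_pmf n p)) f)"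
    unfolding binomial_pmf_Suc[OF p] map_pmf_def[symmetric] using p
    by (intro pmf_expectation_bind) (auto intro!: finite_imageI)
  then show ?thesis using p by (simp add: UNIV_bool)
qed

lemma binomial_moments:
  assumes p: "p \<in> {0..1}"
  shows "measure_pmf.expectation (binomial_pmf n p) real = n * p \<and>
         measure_pmf.expectation (binomial_pmf n p) (\<lambda>k. (real k)^2) = n * p * (1 - p) + (n * p)^2"
proof (induction n)
  case 0
  then show ?case using p by (simp add: binomial_pmf_0)
next
  case (Suc n)
  have shift1: "(\<lambda>k. real (Suc k)) = (\<lambda>k. real k + 1)"
    and shift2: "(\<lambda>k. (real (Suc k))^2) = (\<lambda>k. (real k)^2 + 2 * real k + 1)"
    by (auto simp: power2_eq_square algebra_simps)
  have "integrable (binomial_pmf n p) f" for f :: "nat \<Rightarrow> real" using p by simp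
  then show ?case
    using Suc.IH p
    unfolding expectation_binomial_pmf_Suc[OF p, of n real]
      expectation_binomial_pmf_Suc[OF p, of n "\<lambda>k. (real k)^2"] shift1 shift2
    by (simp add: Bochner_Integration.integral_add algebra_simps power2_eq_square)
qed

lemma binomial_second_moment:
  assumes "0 \<le> p" "p \<le> 1"
  shows "(\<Sum>k\<le>Q. pmf (binomial_pmf Q p) k * (real k)^2) = p * real Q * (p * real Q + 1 - p)"
proof -
  have "(\<Sum>k\<le>Q. pmf (binomial_pmf Q p) k * (real k)^2)
      = measure_pmf.expectation (binomial_pmf Q p) (\<lambda>k. (real k)^2)"
    using assms by (subst expectation_binomial_pmf') auto
  also have "\<dots> = Q * p * (1 - p) + (Q * p)^2" using binomial_moments[of p Q] assms by simp
  finally show ?thesis by (simp add: algebra_simps power2_eq_square)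
qed

(* Stage cost for a fixed number k of targets:
   k / (c + Lam/k) \<ge> k / (X + pi0 (Lam/k) t) \<ge> k^2 / (pi0 Lam t) - D / t^2. *)
lemma alloc_obj_lower_linear:
  assumes pi0: "0 < pi0" "pi0 < 1" and g: "g \<ge> 1" and k: "k \<ge> 1"
    and Lam: "0 < Lam" and c1: "0 < c1"
    and feas: "\<And>t. 2 \<le> t \<Longrightarrow> feasible_alloc k g Lam (l t)"
  shows "\<exists>D. \<forall>t\<ge>2. (real k)^2 / (pi0 * Lam * real t) - D / (real t)^2
                      \<le> alloc_obj pi0 g k (cbar pi0 g Lam c1 k t) (l t)"
proof -
  define a where "a = Lam / real k"
  have alpha: "0 < alpha_coef pi0 g" using alpha_coef_pos[OF pi0] .
  obtain M where M: "\<And>t. cbar pi0 g Lam c1 k t \<le> M + pi0 * a * real t"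
    using cbar_linear_growth[of pi0 g Lam c1 k] alpha pi0 Lam unfolding a_def by auto
  define X where "X = M + a"
  define D where "D = real k ^ 3 * X / (pi0 * Lam)^2"
  have "(real k)^2 / (pi0 * Lam * real t) - D / (real t)^2
          \<le> alloc_obj pi0 g k (cbar pi0 g Lam c1 k t) (l t)" if t: "2 \<le> t" for t
  proof -
    define c where "c = cbar pi0 g Lam c1 k t"
    define Y where "Y = pi0 * a * real t"
    have a: "0 < a" using Lam k by (simp add: a_def)
    have c: "0 < c" unfolding c_def using cbar_pos c1 alpha pi0 Lam by simp
    have Y: "0 < Y" using pi0 a t by (simp add: Y_def)
    have ca: "c + a \<le> X + Y" using M[of t] by (simp add: c_def X_def Y_def)
    have "1 / Y - X / Y^2 \<le> 1 / (X + Y)"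
      using recip_tangent[of "X + Y" Y] ca a c Y by simp
    then have "real k * (1 / Y - X / Y^2) \<le> real k / (X + Y)"
      using mult_left_mono[of _ _ "real k"] by fastforce
    also have "\<dots> \<le> real k / (c + a)"
      using ca a c by (intro divide_left_mono) auto
    also have "\<dots> \<le> alloc_obj pi0 g k c (l t)"
      unfolding a_def using feasible_alloc_cost_lower[OF feas[OF t] c k] pi0 g by simp
    finally have "real k * (1 / Y - X / Y^2) \<le> alloc_obj pi0 g k c (l t)" .
    moreover have "real k * (1 / Y - X / Y^2)
        = (real k)^2 / (pi0 * Lam * real t) - D / (real t)^2"
      using k t pi0 Lam unfolding Y_def a_def D_def
      by (simp add: field_simps power2_eq_square power3_eq_cube)
    ultimately show ?thesis unfolding c_def by simp
  qed
  then show ?thesis by blast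
qed

lemma expected_cost_lower:
  assumes p0: "0 \<le> p0" "p0 \<le> 1" and pi0: "0 < pi0" "pi0 < 1" and g: "g \<ge> 1"
    and Lam: "0 < Lam" and c1: "0 < c1"
    and feas: "\<And>k t. 1 \<le> k \<Longrightarrow> 2 \<le> t \<Longrightarrow> feasible_alloc k g Lam (lam k t)"
  shows "\<exists>D. \<forall>t\<ge>2. p0 * real Q * (p0 * real Q + 1 - p0) / (pi0 * Lam * real t) - D / (real t)^2
                      \<le> expected_cost Q p0 pi0 g Lam c1 lam t"
proof -
  have per_k: "\<exists>D. \<forall>t\<ge>2. (real k)^2 / (pi0 * Lam * real t) - D / (real t)^2
                      \<le> alloc_obj pi0 g k (cbar pi0 g Lam c1 k t) (lam k t)" for k
  proof (cases "k = 0")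
    case True
    then show ?thesis by (intro exI[of _ 0]) (simp add: alloc_obj_def rel_cells_def)
  next
    case False
    then show ?thesis using alloc_obj_lower_linear[OF pi0 g _ Lam c1 feas] by simp
  qed
  obtain D where D: "\<And>k t. 2 \<le> t \<Longrightarrow> (real k)^2 / (pi0 * Lam * real t) - D k / (real t)^2
                      \<le> alloc_obj pi0 g k (cbar pi0 g Lam c1 k t) (lam k t)"
    using per_k by metis
  define w where "w k = pmf (binomial_pmf Q p0) k" for k
  have "p0 * real Q * (p0 * real Q + 1 - p0) / (pi0 * Lam * real t)
          - (\<Sum>k\<le>Q. w k * D k) / (real t)^2
        \<le> expected_cost Q p0 pi0 g Lam c1 lam t" if t: "2 \<le> t" for t
  proof -
    have "p0 * real Q * (p0 * real Q + 1 - p0) / (pi0 * Lam * real t)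
            - (\<Sum>k\<le>Q. w k * D k) / (real t)^2
        = (\<Sum>k\<le>Q. w k * ((real k)^2 / (pi0 * Lam * real t) - D k / (real t)^2))"
      unfolding w_def binomial_second_moment[OF p0, of Q, symmetric]
      by (simp add: sum_subtractf sum_divide_distrib right_diff_distrib times_divide_eq_right)
    also have "\<dots> \<le> (\<Sum>k\<le>Q. w k * alloc_obj pi0 g k (cbar pi0 g Lam c1 k t) (lam k t))"
      by (intro sum_mono mult_left_mono D[OF t]) (simp add: w_def)
    also have "\<dots> = expected_cost Q p0 pi0 g Lam c1 lam t"
      unfolding w_def using p0 pi0 g by (simp add: expected_cost_eq)
    finally show ?thesis .
  qed
  then show ?thesis by blast
qed

theorem proposition2:
  fixes Q g :: nat and p0 pi0 Lam sigma sigma0 :: real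
    and lam :: "nat \<Rightarrow> nat \<Rightarrow> nat \<times> nat \<Rightarrow> real"
  assumes p0: "0 < p0" "p0 < 1"
    and pi0: "0 \<le> pi0" "pi0 < 1" "pi0 \<ge> (1 - pi0) / real g"
    and g: "g \<ge> 1"
    and Lam: "Lam > 0"
    and sig: "sigma > 0" "sigma0 > 0"
    and semi: "\<And>k t. 1 \<le> k \<Longrightarrow> 2 \<le> t \<Longrightarrow>
       semi_omniscient_alloc pi0 g Lam k (cbar pi0 g Lam (sigma^2 / sigma0^2) k t) (lam k t)"
  shows "\<exists>h. h \<in> O(\<lambda>t. 1 / (real t)^2) \<and>
     (\<forall>\<^sub>F t in at_top.
        expected_cost Q p0 pi0 g Lam (sigma^2 / sigma0^2) lam t
          \<ge> p0 * real Q * (p0 * real Q + 1 - p0) / (pi0 * Lam * real t) + h t)"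
proof -
  have "0 < (1 - pi0) / real g" using pi0(2) g by simp
  then have pi0_pos: "0 < pi0" using pi0(3) by linarith
  have c1: "0 < sigma^2 / sigma0^2" using sig by simp
  have feas: "feasible_alloc k g Lam (lam k t)" if "1 \<le> k" "2 \<le> t" for k t
    using semi[OF that] by (simp add: semi_omniscient_alloc_def)
  obtain D where D: "\<And>t. 2 \<le> t \<Longrightarrow>
      p0 * real Q * (p0 * real Q + 1 - p0) / (pi0 * Lam * real t) - D / (real t)^2
        \<le> expected_cost Q p0 pi0 g Lam (sigma^2 / sigma0^2) lam t"
    using expected_cost_lower[of p0 pi0 g Lam "sigma^2 / sigma0^2" lam Q] p0 pi0_pos pi0(2) g Lam c1 feas
    by auto
  show ?thesis
  proof (intro exI conjI)
    show "(\<lambda>t. - D / (real t)^2) \<in> O(\<lambda>t. 1 / (real t)^2)"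
      by (intro bigoI[where c = "\<bar>D\<bar>"] always_eventually allI) (simp add: abs_divide)
    show "\<forall>\<^sub>F t in at_top. expected_cost Q p0 pi0 g Lam (sigma^2 / sigma0^2) lam t
          \<ge> p0 * real Q * (p0 * real Q + 1 - p0) / (pi0 * Lam * real t) + - D / (real t)^2"
      using eventually_ge_at_top[of "2::nat"] by eventually_elim (use D in simp)
  qed
qed

end
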